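(* Let $X,Y\in\mathcal L^2$ have different distributions and suppose $|\mathrm{Supp}(Y)|>2$. Then $(X,Y)\in\mathrm{IC}$ if and only if $(X,Y)\in\mathrm{IC}_0$.
   Context: All random variables live on an atomless probability space. $\mathcal L^2$ denotes the set of non-degenerate real random variables with finite variance. A function $g:\mathbb R\to\mathbb R$ is admissible for $(X,Y)$ if it is measurable and $g(X),g(Y)\in\mathcal L^2$. For $r\in[-1,1]$, $(X,Y)\in\mathrm{IC}_r$ means $X,Y\in\mathcal L^2$ and $\mathrm{Corr}(X,Y)=\mathrm{Corr}(g(X),g(Y))=r$ for all admissible $g$; $\mathrm{IC}=\bigcup_{r\in[-1,1]}\mathrm{IC}_r$. The support of a random variable $X$ is $\mathrm{Supp}(X)=\{x\in\mathbb R:\mathbb P(x-\epsilon<X\le x+\epsilon)>0\text{ for all }\epsilon>0\}$, and $|\cdot|$ denotes cardinality. *)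

theory Defs
  imports "HOL-Probability.Probability"
begin

definition atomless :: "'a measure \<Rightarrow> bool" where
  "atomless M \<longleftrightarrow> (\<forall>A\<in>sets M. measure M A > 0 \<longrightarrow>
      (\<exists>B\<in>sets M. B \<subseteq> A \<and> 0 < measure M B \<and> measure M B < measure M A))"

definition cov :: "'a measure \<Rightarrow> ('a \<Rightarrow> real) \<Rightarrow> ('a \<Rightarrow> real) \<Rightarrow> real" where
  "cov M X Y = (\<integral>\<omega>. (X \<omega> - (\<integral>x. X x \<partial>M)) * (Y \<omega> - (\<integral>x. Y x \<partial>M)) \<partial>M)"

definition var :: "'a measure \<Rightarrow> ('a \<Rightarrow> real) \<Rightarrow> real" where
  "var M X = cov M X X"

definition corr :: "'a measure \<Rightarrow> ('a \<Rightarrow> real) \<Rightarrow> ('a \<Rightarrow> real) \<Rightarrow> real" where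
  "corr M X Y = cov M X Y / (sqrt (var M X) * sqrt (var M Y))"

definition L2 :: "'a measure \<Rightarrow> ('a \<Rightarrow> real) \<Rightarrow> bool" where
  "L2 M X \<longleftrightarrow> X \<in> borel_measurable M \<and> integrable M (\<lambda>\<omega>. (X \<omega>)\<^sup>2) \<and>
     \<not> (\<exists>c. AE \<omega> in M. X \<omega> = c)"

definition admissible :: "'a measure \<Rightarrow> (real \<Rightarrow> real) \<Rightarrow> ('a \<Rightarrow> real) \<Rightarrow> ('a \<Rightarrow> real) \<Rightarrow> bool" where
  "admissible M g X Y \<longleftrightarrow> g \<in> borel_measurable borel \<and> L2 M (g \<circ> X) \<and> L2 M (g \<circ> Y)"

definition IC_r :: "'a measure \<Rightarrow> real \<Rightarrow> ('a \<Rightarrow> real) \<Rightarrow> ('a \<Rightarrow> real) \<Rightarrow> bool" where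
  "IC_r M r X Y \<longleftrightarrow> L2 M X \<and> L2 M Y \<and> corr M X Y = r \<and>
     (\<forall>g. admissible M g X Y \<longrightarrow> corr M (g \<circ> X) (g \<circ> Y) = r)"

definition IC :: "'a measure \<Rightarrow> ('a \<Rightarrow> real) \<Rightarrow> ('a \<Rightarrow> real) \<Rightarrow> bool" where
  "IC M X Y \<longleftrightarrow> (\<exists>r\<in>{-1..1}. IC_r M r X Y)"

definition supp :: "'a measure \<Rightarrow> ('a \<Rightarrow> real) \<Rightarrow> real set" where
  "supp M X = {x. \<forall>\<epsilon>>0. measure M {\<omega>\<in>space M. x - \<epsilon> < X \<omega> \<and> X \<omega> \<le> x + \<epsilon>} > 0}"

end

theory Submission
  imports Defs
begin

(*
  Suppose every admissible g gives Corr(g(X), g(Y)) = r with r \<noteq> 0. Take a Borel partition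
  A, B, C of the line and the test functions g = 1_B + t 1_C, t \<noteq> 0, 1. Then
  Cov(g(X), g(Y))^2 = r^2 Var g(X) Var g(Y), where all three are quadratics in t and the
  variances are determined by the masses of B and C. If Y charges every piece, Var g(Y) has no
  real root, and this identity of quartics forces the two variance quadratics to be
  proportional, so X and Y give the same mass to every piece. Moving a Borel subset of one
  piece into another piece yields a new such partition, so the laws of X and Y agree on all
  Borel sets, contradicting the hypothesis. A suitable partition comes from three points of
  the support of Y; X must charge two of its pieces for g(X) to be non-degenerate, which can be
  arranged by splitting a piece along a set of X-probability strictly between 0 and 1.
*)

lemma quartic_coeffs_eq_0:
  fixes e0 e1 e2 e3 e4 :: real
  assumes "\<And>t. t \<noteq> 0 \<Longrightarrow> t \<noteq> 1 \<Longrightarrow> e0 + e1*t + e2*t^2 + e3*t^3 + e4*t^4 = 0"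
  shows "e0 = 0 \<and> e1 = 0 \<and> e2 = 0 \<and> e3 = 0 \<and> e4 = 0"
proof -
  have "e0 + 2*e1 + 4*e2 + 8*e3 + 16*e4 = 0" "e0 + 3*e1 + 9*e2 + 27*e3 + 81*e4 = 0"
    "e0 + 4*e1 + 16*e2 + 64*e3 + 256*e4 = 0" "e0 - e1 + e2 - e3 + e4 = 0"
    "e0 - 2*e1 + 4*e2 - 8*e3 + 16*e4 = 0"
    using assms[of 2] assms[of 3] assms[of 4] assms[of "-1"] assms[of "-2"] by simp_all
  then show ?thesis by linarith
qed

(* The hypotheses are the coefficient equations of
   (t^2 + g1 t + g0)^2 = (t^2 + a1 t + a0) (t^2 + b1 t + b0). *)
lemma monic_quadratic_factors_eq:
  fixes a0 a1 b0 b1 g0 g1 :: real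
  assumes e3: "2*g1 = a1 + b1" and e2: "g1^2 + 2*g0 = a0 + b0 + a1*b1"
    and e1: "2*g0*g1 = a1*b0 + a0*b1" and e0: "g0^2 = a0*b0"
    and disc_a: "a1^2 \<le> 4*a0" and disc_b: "b1^2 < 4*b0"
  shows "a0 = b0 \<and> a1 = b1"
proof -
  define d where "d = (a1 - b1)/2"
  have a1: "a1 = g1 + d" and b1: "b1 = g1 - d" using e3 unfolding d_def by (simp_all add: field_simps)
  have g0: "2*g0 = a0 + b0 - d^2" using e2 unfolding a1 b1 by (simp add: algebra_simps power2_eq_square)
  have lin: "d * (d*g1 + b0 - a0) = 0"
  proof -
    have "(a0 + b0 - d^2)*2*g1 = 2*(a1*b0 + a0*b1)"
      using e1 g0 by (metis mult.assoc mult.left_commute)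
    then show ?thesis unfolding a1 b1 by (simp add: algebra_simps power2_eq_square)
  qed
  have quad: "(a0 + b0 - d^2)^2 = 4*a0*b0"
  proof -
    have "(2*g0)^2 = 4*a0*b0" using e0 by (simp add: power_mult_distrib)
    then show ?thesis using g0 by simp
  qed
  show ?thesis
  proof (cases "d = 0")
    case True
    then have "(a0 - b0)^2 = 0" using quad by (simp add: algebra_simps power2_eq_square)
    then show ?thesis using True a1 b1 by simp
  next
    case False
    then have "a0 - b0 = d*g1" using lin by simp
    moreover have "(a0 - b0)^2 - 2*d^2*(a0 + b0) + d^2*d^2 = 0"
      using quad by (simp add: algebra_simps power2_eq_square)
    ultimately have "d^2 * (g1^2 + d^2 - 2*(a0 + b0)) = 0" by (simp add: algebra_simps power2_eq_square)
    then have "g1^2 + d^2 = 2*(a0 + b0)" using False by simp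
    moreover have "a1^2 + b1^2 = 2*g1^2 + 2*d^2" unfolding a1 b1 by (simp add: algebra_simps power2_eq_square)
    ultimately have False using disc_a disc_b by (smt (verit))
    then show ?thesis ..
  qed
qed

lemma quadratic_factors_proportional:
  fixes a0 a1 a2 b0 b1 b2 c0 c1 c2 R :: real
  assumes id: "\<And>t. t \<noteq> 0 \<Longrightarrow> t \<noteq> 1 \<Longrightarrow>
      (c0 + c1*t + c2*t^2)^2 = R * ((a0 + a1*t + a2*t^2) * (b0 + b1*t + b2*t^2))"
    and R: "R > 0" and a2: "a2 > 0" and b2: "b2 > 0"
    and disc_a: "a1^2 \<le> 4*a0*a2" and disc_b: "b1^2 < 4*b0*b2"
  shows "a0*b2 = b0*a2 \<and> a1*b2 = b1*a2"
proof -
  have "c0^2 - R*a0*b0 = 0 \<and> 2*c0*c1 - R*(a0*b1 + a1*b0) = 0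
      \<and> c1^2 + 2*c0*c2 - R*(a0*b2 + a1*b1 + a2*b0) = 0
      \<and> 2*c1*c2 - R*(a1*b2 + a2*b1) = 0 \<and> c2^2 - R*a2*b2 = 0"
  proof (rule quartic_coeffs_eq_0)
    fix t :: real assume "t \<noteq> 0" "t \<noteq> 1"
    from id[OF this] show "c0^2 - R*a0*b0 + (2*c0*c1 - R*(a0*b1 + a1*b0))*t
      + (c1^2 + 2*c0*c2 - R*(a0*b2 + a1*b1 + a2*b0))*t^2
      + (2*c1*c2 - R*(a1*b2 + a2*b1))*t^3 + (c2^2 - R*a2*b2)*t^4 = 0"
      by (simp add: algebra_simps power2_eq_square power3_eq_cube power4_eq_xxxx)
  qed
  then have e0: "c0^2 = R*a0*b0" and e1: "2*c0*c1 = R*(a0*b1 + a1*b0)"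
    and e2: "c1^2 + 2*c0*c2 = R*(a0*b2 + a1*b1 + a2*b0)" and e3: "2*c1*c2 = R*(a1*b2 + a2*b1)"
    and e4: "c2^2 = R*a2*b2"
    by simp_all
  have c2: "c2 \<noteq> 0" using e4 R a2 b2 by auto
  have "2*(c1/c2) = 2*c1*c2/c2^2" using c2 by (simp add: power2_eq_square)
  also have "\<dots> = a1/a2 + b1/b2" using e3 e4 R a2 b2 by (simp add: field_simps)
  finally have m3: "2*(c1/c2) = a1/a2 + b1/b2" .
  have "(c1/c2)^2 + 2*(c0/c2) = (c1^2 + 2*c0*c2)/c2^2" using c2 by (simp add: field_simps power2_eq_square)
  also have "\<dots> = a0/a2 + b0/b2 + (a1/a2)*(b1/b2)" using e2 e4 R a2 b2 by (simp add: field_simps)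
  finally have m2: "(c1/c2)^2 + 2*(c0/c2) = a0/a2 + b0/b2 + (a1/a2)*(b1/b2)" .
  have "2*(c0/c2)*(c1/c2) = 2*c0*c1/c2^2" using c2 by (simp add: field_simps power2_eq_square)
  also have "\<dots> = (a1/a2)*(b0/b2) + (a0/a2)*(b1/b2)" using e1 e4 R a2 b2 by (simp add: field_simps)
  finally have m1: "2*(c0/c2)*(c1/c2) = (a1/a2)*(b0/b2) + (a0/a2)*(b1/b2)" .
  have "(c0/c2)^2 = c0^2/c2^2" by (simp add: power_divide)
  also have "\<dots> = (a0/a2)*(b0/b2)" using e0 e4 R a2 b2 by (simp add: field_simps)
  finally have m0: "(c0/c2)^2 = (a0/a2)*(b0/b2)" .
  have "(a1/a2)^2 \<le> 4*(a0/a2)"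
    using disc_a a2 by (simp add: power_divide divide_right_mono field_simps power2_eq_square)
  moreover have "(b1/b2)^2 < 4*(b0/b2)"
    using disc_b b2 by (simp add: power_divide field_simps power2_eq_square)
  ultimately have "a0/a2 = b0/b2 \<and> a1/a2 = b1/b2"
    using monic_quadratic_factors_eq[OF m3 m2 m1 m0] by blast
  then show ?thesis using a2 b2 by (simp add: field_simps)
qed

(* (p2 - p2^2) - 2 p2 p3 t + (p3 - p3^2) t^2 is the variance of 1_B + t 1_C when B and C are
   disjoint with masses p2 and p3; the hypotheses say that two such quadratics are proportional. *)
lemma three_point_probs_eq:
  fixes p2 p3 q2 q3 :: real
  assumes q: "q2 > 0" "q3 > 0" "q2 + q3 < 1" and p: "p3 > 0" "p3 < 1" "p2 \<ge> 0"
    and h0: "(p2 - p2^2)*(q3 - q3^2) = (q2 - q2^2)*(p3 - p3^2)"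
    and h1: "(-2*p2*p3)*(q3 - q3^2) = (-2*q2*q3)*(p3 - p3^2)"
  shows "p2 = q2 \<and> p3 = q3"
proof -
  have "(p3*q3)*(p2*(1 - q3)) = (p3*q3)*(q2*(1 - p3))" using h1 by (simp add: power2_eq_square algebra_simps)
  then have s: "p2*(1 - q3) = q2*(1 - p3)" using q p by simp
  define k where "k = (1 - p3)/(1 - q3)"
  have k: "1 - p3 = k*(1 - q3)" using q by (simp add: k_def)
  have p2: "p2 = q2*k" using s q by (simp add: k_def field_simps)
  have "q2*k*(1 - q2*k)*(q3*(1 - q3)) = q2*(1 - q2)*(p3*(k*(1 - q3)))"
    using h0 unfolding p2 k[symmetric] by (simp add: power2_eq_square algebra_simps)
  then have "(1 - q2*k)*q3 = (1 - q2)*p3" using q p k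
    by (smt (verit) mult.assoc mult.commute mult_cancel_left mult_pos_pos zero_less_mult_iff)
  moreover have "p3 = 1 + k*q3 - k" using k by (simp add: algebra_simps)
  moreover have "(k - 1)*(q2 + q3 - 1) = (1 - q2)*(1 + k*q3 - k) - (1 - q2*k)*q3" by (simp add: algebra_simps)
  ultimately have "(k - 1)*(q2 + q3 - 1) = 0" by simp
  then have "k = 1" using q by simp
  then show ?thesis using p2 k by simp
qed

lemma three_points_if_card_gt_2:
  fixes S :: "'a::linorder set"
  assumes "infinite S \<or> card S > 2"
  shows "\<exists>a b c. a \<in> S \<and> b \<in> S \<and> c \<in> S \<and> a < b \<and> b < c"
proof -
  obtain T where T: "T \<subseteq> S" "card T = 3"
    using assms obtain_subset_with_card_n[of 3 S] infinite_arbitrarily_large[of S 3] by force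
  then obtain x y z where xyz: "T = {x, y, z}" "x \<noteq> y" "y \<noteq> z" "x \<noteq> z" by (auto simp: card_3_iff)
  have "\<exists>a b c. a \<in> {x, y, z} \<and> b \<in> {x, y, z} \<and> c \<in> {x, y, z} \<and> a < b \<and> b < c"
    using xyz(2-4)
    by (cases x y rule: linorder_cases; cases y z rule: linorder_cases; cases x z rule: linorder_cases) blast+
  then show ?thesis using T xyz(1) by blast
qed

lemma cov_sq_eq_if_corr:
  assumes "corr M f h = r" "r \<noteq> 0"
  shows "(cov M f h)^2 = r^2 * (var M f * var M h)"
proof -
  have "sqrt (var M f) * sqrt (var M h) \<noteq> 0"
    using assms unfolding corr_def by auto
  then have "cov M f h = r * (sqrt (var M f) * sqrt (var M h))"
    using assms(1) unfolding corr_def by (simp add: field_simps)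
  moreover have "var M f \<ge> 0" "var M h \<ge> 0"
    unfolding var_def cov_def by (auto intro: integral_nonneg_AE)
  ultimately show ?thesis by (simp add: power_mult_distrib)
qed

definition three_valued :: "real set \<Rightarrow> real set \<Rightarrow> real \<Rightarrow> real \<Rightarrow> real" where
  "three_valued B C t x = indicator B x + t * indicator C x"

lemma three_valued_borel[measurable]:
  assumes [measurable]: "B \<in> sets borel" "C \<in> sets borel"
  shows "three_valued B C t \<in> borel_measurable borel"
  unfolding three_valued_def by measurable

definition borel_partition :: "real set \<Rightarrow> real set \<Rightarrow> real set \<Rightarrow> bool" where
  "borel_partition A B C \<longleftrightarrow> A \<in> sets borel \<and> B \<in> sets borel \<and> C \<in> sets borel \<and>
     A \<inter> B = {} \<and> A \<inter> C = {} \<and> B \<inter> C = {} \<and> A \<union> B \<union> C = UNIV"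

lemma borel_partition_rotate: "borel_partition A B C \<Longrightarrow> borel_partition B C A"
  and borel_partition_swap: "borel_partition A B C \<Longrightarrow> borel_partition A C B"
  unfolding borel_partition_def by blast+

(* Q (the law of Y) charges every piece, so the variance of 1_B + t 1_C under Q has no real
   root in t; P (the law of X) charges two pieces, so 1_B + t 1_C is non-degenerate under P. *)
definition test_partition ::
    "real measure \<Rightarrow> real measure \<Rightarrow> real set \<Rightarrow> real set \<Rightarrow> real set \<Rightarrow> bool" where
  "test_partition P Q A B C \<longleftrightarrow> borel_partition A B C \<and>
     measure Q A > 0 \<and> measure Q B > 0 \<and> measure Q C > 0 \<and>
     (measure P A > 0 \<and> measure P B > 0 \<or> measure P A > 0 \<and> measure P C > 0 \<or>
      measure P B > 0 \<and> measure P C > 0)"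

lemma test_partition_rotate: "test_partition P Q A B C \<Longrightarrow> test_partition P Q B C A"
  and test_partition_swap: "test_partition P Q A B C \<Longrightarrow> test_partition P Q A C B"
  unfolding test_partition_def using borel_partition_rotate borel_partition_swap by blast+

context real_distribution
begin

lemma prob_partition_split:
  assumes "borel_partition A B C" "S \<in> sets borel"
  shows "prob S = prob (S \<inter> A) + prob (S \<inter> B) + prob (S \<inter> C)"
proof -
  have "S = (S \<inter> A \<union> S \<inter> B) \<union> S \<inter> C" using assms(1) by (auto simp: borel_partition_def)
  moreover have "prob ((S \<inter> A \<union> S \<inter> B) \<union> S \<inter> C) = prob (S \<inter> A \<union> S \<inter> B) + prob (S \<inter> C)"
    using assms unfolding borel_partition_def by (intro finite_measure_Union) auto
  moreover have "prob (S \<inter> A \<union> S \<inter> B) = prob (S \<inter> A) + prob (S \<inter> B)"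
    using assms unfolding borel_partition_def by (intro finite_measure_Union) auto
  ultimately show ?thesis by simp
qed

lemma partition_prob_sum: "borel_partition A B C \<Longrightarrow> prob A + prob B + prob C = 1"
  using prob_partition_split[of A B C UNIV] prob_space by simp

end

lemma test_partition_split_piece:
  assumes P: "real_distribution P" and Q: "real_distribution Q"
    and part: "borel_partition A B C"
    and QA: "measure Q A > 0" and QB: "measure Q B > 0" and QC: "measure Q C > 0"
    and PA: "measure P A = 1"
    and H_borel[measurable]: "H \<in> sets borel" and H: "0 < measure P H" "measure P H < 1"
  shows "\<exists>A' B' C'. test_partition P Q A' B' C'"
proof -
  interpret P: real_distribution P by fact
  interpret Q: real_distribution Q by fact
  have [measurable]: "A \<in> sets borel" "B \<in> sets borel" "C \<in> sets borel"
    using part by (auto simp: borel_partition_def)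
  have "P.prob (H - A) \<le> P.prob (UNIV - A)" by (intro P.finite_measure_mono) auto
  also have "\<dots> = 0" using PA P.prob_compl[of A] by simp
  finally have "P.prob (H - A) = 0" using measure_nonneg[of P "H - A"] by linarith
  then have PAH: "P.prob (A \<inter> H) = P.prob H"
    using P.finite_measure_Diff'[of H A] by (simp add: Int_commute)
  then have PAH': "P.prob (A - H) = 1 - P.prob H"
    using P.finite_measure_Diff'[of A H] PA by simp
  obtain G where [measurable]: "G \<in> sets borel"
    and PG: "P.prob (A \<inter> G) > 0" "P.prob (A - G) > 0" and QG: "Q.prob (A - G) > 0"
  proof (cases "Q.prob (A - H) > 0")
    case True
    then show ?thesis using that[of H] PAH PAH' H by simp
  next
    case False
    have "Q.prob A = Q.prob (A \<inter> H) + Q.prob (A - H)"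
      using Q.finite_measure_Diff'[of A H] by simp
    then have "Q.prob (A \<inter> H) > 0" using False QA by linarith
    moreover have "A \<inter> - H = A - H" "A - - H = A \<inter> H" by auto
    ultimately show ?thesis using that[of "- H"] PAH PAH' H by simp
  qed
  have "borel_partition ((A \<inter> G) \<union> B) (A - G) C"
    using part unfolding borel_partition_def by auto
  moreover have "Q.prob ((A \<inter> G) \<union> B) \<ge> Q.prob B" "P.prob ((A \<inter> G) \<union> B) \<ge> P.prob (A \<inter> G)"
    by (intro Q.finite_measure_mono P.finite_measure_mono; auto)+
  ultimately have "test_partition P Q ((A \<inter> G) \<union> B) (A - G) C"
    unfolding test_partition_def using PG QG QB QC by auto
  then show ?thesis by blast
qed

lemma test_partition_exists:
  assumes P: "real_distribution P" and Q: "real_distribution Q"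
    and part: "borel_partition A B C"
    and QA: "measure Q A > 0" and QB: "measure Q B > 0" and QC: "measure Q C > 0"
    and H_borel[measurable]: "H \<in> sets borel" and H: "0 < measure P H" "measure P H < 1"
  shows "\<exists>A' B' C'. test_partition P Q A' B' C'"
proof (cases "test_partition P Q A B C")
  case False
  interpret P: real_distribution P by fact
  have "P.prob A = 1 \<or> P.prob B = 1 \<or> P.prob C = 1"
    using False P.partition_prob_sum[OF part] part QA QB QC
      measure_nonneg[of P A] measure_nonneg[of P B] measure_nonneg[of P C]
    unfolding test_partition_def by linarith
  then show ?thesis
    using test_partition_split_piece[OF P Q part QA QB QC _ H_borel H]
      test_partition_split_piece[OF P Q borel_partition_rotate[OF part] QB QC QA _ H_borel H]
      test_partition_split_piece[OF P Q borel_partition_rotate[OF borel_partition_rotate[OF part]] QC QA QB _ H_borel H]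
    by blast
qed blast

context prob_space
begin

lemma integral_indicator_comp:
  fixes X :: "'a \<Rightarrow> real"
  assumes "X \<in> borel_measurable M" "S \<in> sets borel"
  shows "(\<integral>\<omega>. indicator S (X \<omega>) \<partial>M) = measure (distr M borel X) S"
  using integral_distr[of X M borel "indicator S :: real \<Rightarrow> real"] assms by simp

lemma cov_eq_expectation_diff:
  assumes "integrable M f" "integrable M h" "integrable M (\<lambda>\<omega>. f \<omega> * h \<omega>)"
  shows "cov M f h = expectation (\<lambda>\<omega>. f \<omega> * h \<omega>) - expectation f * expectation h"
proof -
  define a where "a = expectation f"
  define b where "b = expectation h"
  have "(\<lambda>\<omega>. (f \<omega> - a) * (h \<omega> - b)) = (\<lambda>\<omega>. (f \<omega> * h \<omega> - (b * f \<omega> + a * h \<omega>)) + a*b)"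
    by (auto simp: algebra_simps)
  then have "cov M f h = (\<integral>\<omega>. (f \<omega> * h \<omega> - (b * f \<omega> + a * h \<omega>)) + a*b \<partial>M)"
    unfolding cov_def a_def[symmetric] b_def[symmetric] by simp
  also have "\<dots> = expectation (\<lambda>\<omega>. f \<omega> * h \<omega>) - (b*a + a*b) + a*b"
    using assms by (simp add: a_def b_def prob_space)
  finally show ?thesis by (simp add: a_def b_def)
qed

lemma cov_three_valued:
  fixes X Y :: "'a \<Rightarrow> real"
  assumes [measurable]: "X \<in> borel_measurable M" "Y \<in> borel_measurable M" "B \<in> sets borel" "C \<in> sets borel"
  shows "cov M (three_valued B C t \<circ> X) (three_valued B C t \<circ> Y)
    = ((\<integral>\<omega>. indicator B (X \<omega>) * indicator B (Y \<omega>) \<partial>M)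
       + t * ((\<integral>\<omega>. indicator B (X \<omega>) * indicator C (Y \<omega>) \<partial>M)
              + (\<integral>\<omega>. indicator C (X \<omega>) * indicator B (Y \<omega>) \<partial>M))
       + t^2 * (\<integral>\<omega>. indicator C (X \<omega>) * indicator C (Y \<omega>) \<partial>M))
      - (measure (distr M borel X) B + t * measure (distr M borel X) C)
        * (measure (distr M borel Y) B + t * measure (distr M borel Y) C)"
proof -
  have bounded: "integrable M f"
    if "f \<in> borel_measurable M" "\<And>\<omega>. \<bar>f \<omega>\<bar> \<le> 1" for f :: "'a \<Rightarrow> real"
    using that by (intro integrable_const_bound[where B=1]) auto
  have ind: "integrable M (\<lambda>\<omega>. indicator S (Z \<omega>) :: real)"
    if [measurable]: "Z \<in> borel_measurable M" "S \<in> sets borel" for Z :: "'a \<Rightarrow> real" and S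
    by (rule bounded) (auto simp: indicator_def)
  have ind2: "integrable M (\<lambda>\<omega>. indicator S (X \<omega>) * indicator T (Y \<omega>) :: real)"
    if [measurable]: "S \<in> sets borel" "T \<in> sets borel" for S T
    by (rule bounded) (auto simp: indicator_def)
  have comp: "three_valued B C t \<circ> Z = (\<lambda>\<omega>. indicator B (Z \<omega>) + t * indicator C (Z \<omega>))"
    for Z :: "'a \<Rightarrow> real"
    by (auto simp: three_valued_def)
  have prod: "(\<lambda>\<omega>. (indicator B (X \<omega>) + t * indicator C (X \<omega>))
                  * (indicator B (Y \<omega>) + t * indicator C (Y \<omega>)))
      = (\<lambda>\<omega>. indicator B (X \<omega>) * indicator B (Y \<omega>)
       + t * (indicator B (X \<omega>) * indicator C (Y \<omega>) + indicator C (X \<omega>) * indicator B (Y \<omega>))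
       + t^2 * (indicator C (X \<omega>) * indicator C (Y \<omega>)) :: real)"
    by (simp add: fun_eq_iff algebra_simps power2_eq_square)
  show ?thesis
    unfolding comp by (subst cov_eq_expectation_diff) (simp_all add: prod ind ind2 integral_indicator_comp)
qed

lemma var_three_valued:
  fixes Z :: "'a \<Rightarrow> real"
  assumes [measurable]: "Z \<in> borel_measurable M" "B \<in> sets borel" "C \<in> sets borel" and "B \<inter> C = {}"
  shows "var M (three_valued B C t \<circ> Z) =
      (measure (distr M borel Z) B - (measure (distr M borel Z) B)^2)
      + (-2 * measure (distr M borel Z) B * measure (distr M borel Z) C) * t
      + (measure (distr M borel Z) C - (measure (distr M borel Z) C)^2) * t^2"
proof -
  have "(\<lambda>\<omega>. indicator S (Z \<omega>) * indicator S (Z \<omega>) :: real) = (\<lambda>\<omega>. indicator S (Z \<omega>))" for S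
    by (auto simp: indicator_def)
  moreover have "(\<lambda>\<omega>. indicator B (Z \<omega>) * indicator C (Z \<omega>) :: real) = (\<lambda>\<omega>. 0)"
    and "(\<lambda>\<omega>. indicator C (Z \<omega>) * indicator B (Z \<omega>) :: real) = (\<lambda>\<omega>. 0)"
    using assms(4) by (force simp: indicator_def fun_eq_iff)+
  ultimately show ?thesis
    unfolding var_def cov_three_valued[OF assms(1,1-3)]
    by (simp add: integral_indicator_comp algebra_simps power2_eq_square)
qed

lemma ex_in_set_if_AE:
  fixes X :: "'a \<Rightarrow> real"
  assumes "AE \<omega> in M. P \<omega>" "X \<in> borel_measurable M" "S \<in> sets borel"
    and "measure (distr M borel X) S > 0"
  shows "\<exists>\<omega>\<in>space M. X \<omega> \<in> S \<and> P \<omega>"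
proof (rule ccontr)
  assume "\<not> ?thesis"
  then have "AE \<omega> in M. \<omega> \<notin> X -` S \<inter> space M" using assms(1) by auto
  then have "prob (X -` S \<inter> space M) = 0" using assms(2,3) by (subst prob_eq_0) auto
  then show False using assms by (simp add: measure_distr)
qed

lemma not_AE_const_comp:
  fixes X :: "'a \<Rightarrow> real"
  assumes "X \<in> borel_measurable M" "S \<in> sets borel" "T \<in> sets borel"
    and "measure (distr M borel X) S > 0" "measure (distr M borel X) T > 0"
    and "\<And>x y. x \<in> S \<Longrightarrow> y \<in> T \<Longrightarrow> g x \<noteq> g y"
  shows "\<not> (\<exists>c. AE \<omega> in M. (g \<circ> X) \<omega> = c)"
proof
  assume "\<exists>c. AE \<omega> in M. (g \<circ> X) \<omega> = c"
  then obtain c where ae: "AE \<omega> in M. g (X \<omega>) = c" by auto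
  obtain \<omega> where "X \<omega> \<in> S" "g (X \<omega>) = c" using ex_in_set_if_AE[OF ae assms(1,2,4)] by blast
  moreover obtain \<omega>' where "X \<omega>' \<in> T" "g (X \<omega>') = c" using ex_in_set_if_AE[OF ae assms(1,3,5)] by blast
  ultimately show False using assms(6) by metis
qed

lemma L2_three_valued:
  fixes X :: "'a \<Rightarrow> real"
  assumes [measurable]: "X \<in> borel_measurable M" and part: "borel_partition A B C"
    and t: "t \<noteq> 0" "t \<noteq> 1"
    and charged: "measure (distr M borel X) A > 0 \<and> measure (distr M borel X) B > 0
      \<or> measure (distr M borel X) A > 0 \<and> measure (distr M borel X) C > 0
      \<or> measure (distr M borel X) B > 0 \<and> measure (distr M borel X) C > 0"
  shows "L2 M (three_valued B C t \<circ> X)"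
proof -
  have [measurable]: "A \<in> sets borel" "B \<in> sets borel" "C \<in> sets borel"
    using part by (auto simp: borel_partition_def)
  have g_eq: "three_valued B C t x = (if x \<in> B then 1 else if x \<in> C then t else 0)" for x
    using part by (auto simp: three_valued_def borel_partition_def)
  have "\<bar>(three_valued B C t x)^2\<bar> \<le> 1 + t^2" for x
    by (simp add: g_eq)
  then have "integrable M (\<lambda>\<omega>. ((three_valued B C t \<circ> X) \<omega>)^2)"
    by (intro integrable_const_bound[where B="1 + t^2"]) auto
  moreover have "\<not> (\<exists>c. AE \<omega> in M. (three_valued B C t \<circ> X) \<omega> = c)"
    using charged
  proof (elim disjE conjE)
    assume "measure (distr M borel X) A > 0" "measure (distr M borel X) B > 0"
    then show ?thesis
      by (rule not_AE_const_comp[rotated 3]) (use part in \<open>auto simp: g_eq borel_partition_def\<close>)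
  next
    assume "measure (distr M borel X) A > 0" "measure (distr M borel X) C > 0"
    then show ?thesis
      by (rule not_AE_const_comp[rotated 3]) (use part t in \<open>auto simp: g_eq borel_partition_def\<close>)
  next
    assume "measure (distr M borel X) B > 0" "measure (distr M borel X) C > 0"
    then show ?thesis
      by (rule not_AE_const_comp[rotated 3]) (use part t in \<open>auto simp: g_eq borel_partition_def\<close>)
  qed
  ultimately show ?thesis unfolding L2_def by simp
qed

lemma law_splits_at_expectation:
  fixes X :: "'a \<Rightarrow> real"
  assumes X: "integrable M X" and nondeg: "\<not> (\<exists>c. AE \<omega> in M. X \<omega> = c)"
  shows "0 < measure (distr M borel X) {expectation X<..} \<and> measure (distr M borel X) {expectation X<..} < 1"
proof -
  define m where "m = expectation X"
  have [measurable]: "X \<in> borel_measurable M" using X by auto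
  have AE_eq: "AE \<omega> in M. X \<omega> = m" if "AE \<omega> in M. 0 \<le> s * (X \<omega> - m)" "s \<noteq> 0" for s
  proof -
    have "expectation (\<lambda>\<omega>. s * (X \<omega> - m)) = 0"
      using X by (simp add: m_def prob_space algebra_simps)
    then have "AE \<omega> in M. s * (X \<omega> - m) = 0"
      using integral_nonneg_eq_0_iff_AE[of M "\<lambda>\<omega>. s * (X \<omega> - m)"] that X by simp
    then show ?thesis using that(2) by auto
  qed
  have law: "measure (distr M borel X) {m<..} = \<P>(\<omega> in M. m < X \<omega>)"
    by (simp add: measure_distr vimage_def Int_def conj_commute)
  show ?thesis
    unfolding m_def[symmetric] law
  proof (rule ccontr)
    assume "\<not> (0 < \<P>(\<omega> in M. m < X \<omega>) \<and> \<P>(\<omega> in M. m < X \<omega>) < 1)"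
    moreover have "0 \<le> \<P>(\<omega> in M. m < X \<omega>)" "\<P>(\<omega> in M. m < X \<omega>) \<le> 1" by simp_all
    ultimately consider "\<P>(\<omega> in M. m < X \<omega>) = 0" | "\<P>(\<omega> in M. m < X \<omega>) = 1" by linarith
    then show False
    proof cases
      case 1
      then have "AE \<omega> in M. \<not> m < X \<omega>" by (simp add: prob_Collect_eq_0)
      then have "AE \<omega> in M. 0 \<le> (-1) * (X \<omega> - m)" by eventually_elim simp
      then show False using AE_eq[of "-1"] nondeg by auto
    next
      case 2
      then have "AE \<omega> in M. m < X \<omega>" by (simp add: prob_Collect_eq_1)
      then have "AE \<omega> in M. 0 \<le> 1 * (X \<omega> - m)" by eventually_elim simp
      then show False using AE_eq[of 1] nondeg by auto
    qed
  qed
qed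

lemma supp_neighbourhood_pos:
  fixes Y :: "'a \<Rightarrow> real"
  assumes [measurable]: "Y \<in> borel_measurable M" and "y \<in> supp M Y" "e > 0"
    and "I \<in> sets borel" "{y - e<..y + e} \<subseteq> I"
  shows "measure (distr M borel Y) I > 0"
proof -
  interpret PY: real_distribution "distr M borel Y" by simp
  have "prob {\<omega>\<in>space M. y - e < Y \<omega> \<and> Y \<omega> \<le> y + e} > 0"
    using assms(2,3) unfolding supp_def by blast
  moreover have "{\<omega>\<in>space M. y - e < Y \<omega> \<and> Y \<omega> \<le> y + e} = Y -` {y - e<..y + e} \<inter> space M" by auto
  ultimately have "PY.prob {y - e<..y + e} > 0" by (simp add: measure_distr)
  also have "\<dots> \<le> PY.prob I" using assms(4,5) by (intro PY.finite_measure_mono) auto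
  finally show ?thesis .
qed

lemma supp_three_points_partition:
  fixes Y :: "'a \<Rightarrow> real"
  assumes [measurable]: "Y \<in> borel_measurable M" and "infinite (supp M Y) \<or> card (supp M Y) > 2"
  shows "\<exists>A B C. borel_partition A B C \<and> measure (distr M borel Y) A > 0 \<and>
    measure (distr M borel Y) B > 0 \<and> measure (distr M borel Y) C > 0"
proof -
  obtain y1 y2 y3 where y: "y1 \<in> supp M Y" "y2 \<in> supp M Y" "y3 \<in> supp M Y" "y1 < y2" "y2 < y3"
    using three_points_if_card_gt_2[OF assms(2)] by blast
  define c1 c2 where "c1 = (y1 + y2)/2" "c2 = (y2 + y3)/2"
  have c: "y1 < c1" "c1 < y2" "y2 < c2" "c2 < y3" using y by (auto simp: c1_c2_def)
  have "borel_partition {..c1} {c1<..c2} {c2<..}" unfolding borel_partition_def using c by auto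
  moreover have "measure (distr M borel Y) {..c1} > 0"
    by (rule supp_neighbourhood_pos[OF _ y(1), of "c1 - y1"]) (use c in auto)
  moreover have "measure (distr M borel Y) {c1<..c2} > 0"
    by (rule supp_neighbourhood_pos[OF _ y(2), of "min (y2 - c1) (c2 - y2)"]) (use c in auto)
  moreover have "measure (distr M borel Y) {c2<..} > 0"
    by (rule supp_neighbourhood_pos[OF _ y(3), of "y3 - c2"]) (use c in auto)
  ultimately show ?thesis by blast
qed

end

locale nonzero_invariant_correlation = prob_space M for M :: "'a measure" +
  fixes X Y :: "'a \<Rightarrow> real" and r :: real
  assumes X_borel[measurable]: "X \<in> borel_measurable M"
    and Y_borel[measurable]: "Y \<in> borel_measurable M"
    and r_nonzero: "r \<noteq> 0"
    and corr_eq: "\<And>g. admissible M g X Y \<Longrightarrow> corr M (g \<circ> X) (g \<circ> Y) = r"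
begin

sublocale PX: real_distribution "distr M borel X" by simp
sublocale PY: real_distribution "distr M borel Y" by simp

lemma law_eq_on_pieces_if_third_charged:
  assumes tp: "test_partition (distr M borel X) (distr M borel Y) A B C"
    and PXC: "PX.prob C > 0"
  shows "PX.prob B = PY.prob B \<and> PX.prob C = PY.prob C"
proof -
  have part: "borel_partition A B C" and QA: "PY.prob A > 0" and QB: "PY.prob B > 0" and QC: "PY.prob C > 0"
    and charged: "PX.prob A > 0 \<and> PX.prob B > 0 \<or> PX.prob A > 0 \<and> PX.prob C > 0 \<or> PX.prob B > 0 \<and> PX.prob C > 0"
    using tp unfolding test_partition_def by auto
  have B[measurable]: "B \<in> sets borel" and C[measurable]: "C \<in> sets borel" and BC: "B \<inter> C = {}"
    using part by (auto simp: borel_partition_def)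
  define p2 p3 q2 q3 where "p2 = PX.prob B" "p3 = PX.prob C" "q2 = PY.prob B" "q3 = PY.prob C"
  have sumX: "PX.prob A = 1 - p2 - p3" and sumY: "PY.prob A = 1 - q2 - q3"
    using PX.partition_prob_sum[OF part] PY.partition_prob_sum[OF part] unfolding p2_p3_q2_q3_def by simp_all
  define m :: "real set \<Rightarrow> real set \<Rightarrow> real"
    where "m S T = (\<integral>\<omega>. indicator S (X \<omega>) * indicator T (Y \<omega>) \<partial>M)" for S T
  define c0 c1 c2 where "c0 = m B B - p2*q2" "c1 = m B C + m C B - p2*q3 - p3*q2" "c2 = m C C - p3*q3"
  define a0 a1 a2 where "a0 = p2 - p2^2" "a1 = -2*p2*p3" "a2 = p3 - p3^2"
  define b0 b1 b2 where "b0 = q2 - q2^2" "b1 = -2*q2*q3" "b2 = q3 - q3^2"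
  have poly: "(c0 + c1*t + c2*t^2)^2 = r^2 * ((a0 + a1*t + a2*t^2) * (b0 + b1*t + b2*t^2))"
    if t: "t \<noteq> 0" "t \<noteq> 1" for t
  proof -
    let ?g = "three_valued B C t"
    have "admissible M ?g X Y"
      unfolding admissible_def using L2_three_valued[OF X_borel part t] L2_three_valued[OF Y_borel part t]
        charged QA QB QC by auto
    then have "(cov M (?g \<circ> X) (?g \<circ> Y))^2 = r^2 * (var M (?g \<circ> X) * var M (?g \<circ> Y))"
      by (intro cov_sq_eq_if_corr corr_eq r_nonzero)
    moreover have "cov M (?g \<circ> X) (?g \<circ> Y) = c0 + c1*t + c2*t^2"
      unfolding cov_three_valued[OF X_borel Y_borel B C]
        c0_c1_c2_def m_def p2_p3_q2_q3_def by (simp add: algebra_simps power2_eq_square)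
    moreover have "var M (?g \<circ> X) = a0 + a1*t + a2*t^2" "var M (?g \<circ> Y) = b0 + b1*t + b2*t^2"
      unfolding var_three_valued[OF X_borel B C BC] var_three_valued[OF Y_borel B C BC]
        a0_a1_a2_def b0_b1_b2_def p2_p3_q2_q3_def by (simp_all add: algebra_simps)
    ultimately show ?thesis by simp
  qed
  have p: "p3 > 0" "p3 < 1" "p2 \<ge> 0"
    using PXC charged sumX measure_nonneg[of "distr M borel X" A] measure_nonneg[of "distr M borel X" B]
    unfolding p2_p3_q2_q3_def by (smt (verit))+
  have q: "q2 > 0" "q3 > 0" "q2 + q3 < 1"
    using QA QB QC sumY unfolding p2_p3_q2_q3_def by auto
  have "a2 > 0" "b2 > 0"
    using p q unfolding a0_a1_a2_def b0_b1_b2_def by (simp_all add: power2_eq_square)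
  moreover have "4*a0*a2 - a1^2 = 4*p2*p3*(1 - p2 - p3)" "4*b0*b2 - b1^2 = 4*q2*q3*(1 - q2 - q3)"
    unfolding a0_a1_a2_def b0_b1_b2_def by (simp_all add: algebra_simps power2_eq_square)
  moreover have "4*p2*p3*(1 - p2 - p3) \<ge> 0" "4*q2*q3*(1 - q2 - q3) > 0"
    using p q sumX measure_nonneg[of "distr M borel X" A] by simp_all
  ultimately have "a0*b2 = b0*a2 \<and> a1*b2 = b1*a2"
    using quadratic_factors_proportional[OF poly] r_nonzero by auto
  then show ?thesis
    using three_point_probs_eq[OF q p] unfolding a0_a1_a2_def b0_b1_b2_def p2_p3_q2_q3_def by auto
qed

lemma law_eq_on_test_partition:
  assumes tp: "test_partition (distr M borel X) (distr M borel Y) A B C"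
  shows "PX.prob A = PY.prob A \<and> PX.prob B = PY.prob B \<and> PX.prob C = PY.prob C"
proof -
  have part: "borel_partition A B C" using tp by (simp add: test_partition_def)
  have "PX.prob B = PY.prob B \<and> PX.prob C = PY.prob C"
  proof (cases "PX.prob C > 0")
    case True
    then show ?thesis using law_eq_on_pieces_if_third_charged[OF tp] by blast
  next
    case False
    then have "PX.prob B > 0" using tp by (auto simp: test_partition_def)
    then show ?thesis using law_eq_on_pieces_if_third_charged[OF test_partition_swap[OF tp]] by blast
  qed
  then show ?thesis using PX.partition_prob_sum[OF part] PY.partition_prob_sum[OF part] by linarith
qed

lemma law_eq_on_subset_of_piece:
  assumes tp: "test_partition (distr M borel X) (distr M borel Y) A B C"
    and S: "S \<in> sets borel" "S \<subseteq> A"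
  shows "PX.prob S = PY.prob S"
proof -
  have part: "borel_partition A B C" and QB: "PY.prob B > 0" and QC: "PY.prob C > 0"
    using tp by (auto simp: test_partition_def)
  have [measurable]: "A \<in> sets borel" "B \<in> sets borel" "C \<in> sets borel"
    using part by (auto simp: borel_partition_def)
  have eq: "PX.prob A = PY.prob A" "PX.prob B = PY.prob B" "PX.prob C = PY.prob C"
    using law_eq_on_test_partition[OF tp] by auto
  have PXB: "PX.prob B > 0" and PXC: "PX.prob C > 0" using QB QC eq by auto
  have moved: "PX.prob T = PY.prob T"
    if T[measurable]: "T \<in> sets borel" "T \<subseteq> A" and QT: "PY.prob (A - T) > 0" for T
  proof -
    have "borel_partition (A - T) (B \<union> T) C" using part T unfolding borel_partition_def by auto
    moreover have "PY.prob (B \<union> T) \<ge> PY.prob B" "PX.prob (B \<union> T) \<ge> PX.prob B"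
      by (intro PY.finite_measure_mono PX.finite_measure_mono; simp)+
    ultimately have "test_partition (distr M borel X) (distr M borel Y) (A - T) (B \<union> T) C"
      unfolding test_partition_def using QT QB QC PXB PXC by auto
    then have "PX.prob (B \<union> T) = PY.prob (B \<union> T)" using law_eq_on_test_partition by blast
    moreover have "B \<inter> T = {}" using part T unfolding borel_partition_def by auto
    ultimately show ?thesis
      using eq PX.finite_measure_Union[of B T] PY.finite_measure_Union[of B T] by simp
  qed
  show ?thesis
  proof (cases "PY.prob (A - S) > 0")
    case True
    then show ?thesis using moved S by blast
  next
    case False
    then have "PY.prob S > 0"
      using S PY.finite_measure_Diff[of A S] eq QB QC part tp by (auto simp: test_partition_def)
    moreover have "A - (A - S) = S" using S by auto
    ultimately have "PX.prob (A - S) = PY.prob (A - S)" using moved[of "A - S"] S by auto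
    then show ?thesis using S eq PX.finite_measure_Diff[of A S] PY.finite_measure_Diff[of A S] by simp
  qed
qed

lemma law_eq_if_test_partition:
  assumes tp: "test_partition (distr M borel X) (distr M borel Y) A B C"
  shows "distr M borel X = distr M borel Y"
proof (rule measure_eqI)
  fix S assume "S \<in> sets (distr M borel X)"
  then have S: "S \<in> sets borel" by simp
  have part: "borel_partition A B C" using tp by (simp add: test_partition_def)
  have "PX.prob (S \<inter> A) = PY.prob (S \<inter> A)"
    using law_eq_on_subset_of_piece[OF tp] part S by (auto simp: borel_partition_def)
  moreover have "PX.prob (S \<inter> B) = PY.prob (S \<inter> B)"
    using law_eq_on_subset_of_piece[OF test_partition_rotate[OF tp]] part S
    by (auto simp: borel_partition_def)
  moreover have "PX.prob (S \<inter> C) = PY.prob (S \<inter> C)"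
    using law_eq_on_subset_of_piece[OF test_partition_rotate[OF test_partition_rotate[OF tp]]] part S
    by (auto simp: borel_partition_def)
  ultimately have "PX.prob S = PY.prob S"
    using PX.prob_partition_split[OF part S] PY.prob_partition_split[OF part S] by simp
  then show "emeasure (distr M borel X) S = emeasure (distr M borel Y) S"
    by (simp add: PX.emeasure_eq_measure PY.emeasure_eq_measure)
qed simp

end

theorem theorem2:
  fixes M :: "'a measure" and X Y :: "'a \<Rightarrow> real"
  assumes "prob_space M" and "atomless M"
    and "L2 M X" and "L2 M Y"
    and "distr M borel X \<noteq> distr M borel Y"
    and "infinite (supp M Y) \<or> card (supp M Y) > 2"
  shows "IC M X Y \<longleftrightarrow> IC_r M 0 X Y"
proof
  assume "IC_r M 0 X Y"
  then show "IC M X Y" unfolding IC_def by force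
next
  interpret prob_space M by fact
  have X[measurable]: "X \<in> borel_measurable M" and Y[measurable]: "Y \<in> borel_measurable M"
    and X_sq: "integrable M (\<lambda>\<omega>. (X \<omega>)\<^sup>2)" and X_nondeg: "\<not> (\<exists>c. AE \<omega> in M. X \<omega> = c)"
    using assms(3,4) unfolding L2_def by auto
  assume "IC M X Y"
  then obtain r where ICr: "IC_r M r X Y" unfolding IC_def by auto
  show "IC_r M 0 X Y"
  proof (cases "r = 0")
    case False
    then interpret nonzero_invariant_correlation M X Y r
      using ICr X Y by unfold_locales (auto simp: IC_r_def)
    obtain A B C where "borel_partition A B C" "PY.prob A > 0" "PY.prob B > 0" "PY.prob C > 0"
      using supp_three_points_partition[OF Y assms(6)] by blast
    moreover have "integrable M X" using square_integrable_imp_integrable[OF X X_sq] .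
    ultimately obtain A' B' C' where "test_partition (distr M borel X) (distr M borel Y) A' B' C'"
      using test_partition_exists[OF PX.real_distribution_axioms PY.real_distribution_axioms]
        law_splits_at_expectation[OF _ X_nondeg] by (metis borel_open open_greaterThan)
    then show ?thesis using law_eq_if_test_partition assms(5) by blast
  qed (use ICr in simp)
qed

end
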